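(* Let $\mathcal{G}$ be a linear $3$-partite $3$-graph with vertex classes $\mathcal{A},\mathcal{B},\mathcal{C}$ (every hyperedge has exactly one vertex in each class). Let $G$ be a simple bipartite graph with parts $A=\binom{\mathcal{A}}{2}$ and $B=\binom{\mathcal{B}}{2}$ such that for every edge of $G$ between $\{a_1,a_2\}\in A$ and $\{b_1,b_2\}\in B$ there is some $c\in\mathcal{C}$ with $a_1b_1c,\ a_2b_2c\in E(\mathcal{G})$, or there is some $c'\in\mathcal{C}$ with $a_1b_2c',\ a_2b_1c'\in E(\mathcal{G})$. Let $k\ge t\ge 4$ be integers, and suppose $F$ is a $2$-degenerate subgraph of $G$ with $k$ vertices and $2k-t$ edges. Then $\mathcal{G}$ contains a subgraph $\mathcal{F}$ such that (1) $|V(\mathcal{F})|-4t\le |E(\mathcal{F})|\le 4k$, and (2) either $|E(\mathcal{F})|\ge 4k-10^4t^3$ or $|E(\mathcal{F})|\ge |V(\mathcal{F})|>0$.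
   Context: A $3$-graph is linear if any two distinct hyperedges share at most one vertex. A graph is $2$-degenerate if its vertices can be ordered $v_1,\dots,v_k$ so that each $v_i$ has at most $2$ neighbours among $v_1,\dots,v_{i-1}$. A subgraph $\mathcal{F}$ of $\mathcal{G}$ consists of a vertex set $V(\mathcal{F})\subseteq V(\mathcal{G})$ and a set $E(\mathcal{F})\subseteq E(\mathcal{G})$ of hyperedges each contained in $V(\mathcal{F})$ (isolated vertices allowed). *)

theory Defs
  imports Main
begin

definition tripartite_3graph :: "'a set \<Rightarrow> 'a set \<Rightarrow> 'a set \<Rightarrow> 'a set set \<Rightarrow> bool" where
  "tripartite_3graph Aa Bb Cc E \<longleftrightarrow>
     finite Aa \<and> finite Bb \<and> finite Cc \<and>
     Aa \<inter> Bb = {} \<and> Aa \<inter> Cc = {} \<and> Bb \<inter> Cc = {} \<and>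
     (\<forall>e\<in>E. \<exists>a\<in>Aa. \<exists>b\<in>Bb. \<exists>c\<in>Cc. e = {a, b, c})"

definition linear_hg :: "'a set set \<Rightarrow> bool" where
  "linear_hg E \<longleftrightarrow> (\<forall>e\<in>E. \<forall>f\<in>E. e \<noteq> f \<longrightarrow> card (e \<inter> f) \<le> 1)"

definition two_degenerate :: "'v set \<Rightarrow> ('v \<times> 'v) set \<Rightarrow> bool" where
  "two_degenerate V E \<longleftrightarrow>
     (\<exists>vs. distinct vs \<and> set vs = V \<and>
        (\<forall>i<length vs. card {j. j < i \<and> ((vs!j, vs!i) \<in> E \<or> (vs!i, vs!j) \<in> E)} \<le> 2))"

end

theory Submission imports Defs begin

(* Every edge {a1, a2} {b1, b2} of F is witnessed by two hyperedges a1 b1 c and a2 b2 c through a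
   common apex c; call them the cells of the edge. The subgraph consists of all cells, on the
   vertex set Z of F (the vertices of A and B lying in pairs of F) together with the apexes, so it
   has at most 2 |E(F)| <= 4k hyperedges. Each cell contains exactly one apex, and by linearity an
   edge is determined by its apex and either of its two pairs; hence if m cells pass through an
   apex c, at most binom(m, 2) edges have apex c.
   Run through a 2-degenerate ordering of F. When a vertex z first occurs, in the pair P, each
   earlier neighbour of P contributes the cell of the joining edge that contains z, and by
   linearity all these cells are distinct. As P has at most two new vertices and at most two
   earlier neighbours, this gives 2 |Z| + 2 |E(F)| <= #cells + 4k; since each apex lies in at least
   two cells, the subgraph has at most #cells + t vertices. If it has more vertices than cells, the cells exceed twice the number of
   apexes by less than 2t, and the binomial bound then forces #cells >= 4k - O(t^2). *)

lemma linear_hg_eqI: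
  assumes "linear_hg E" "x \<in> E" "y \<in> E" "finite x"
    and "u \<in> x" "u \<in> y" "v \<in> x" "v \<in> y" "u \<noteq> v"
  shows "x = y"
proof (rule ccontr)
  assume "x \<noteq> y"
  then have "card (x \<inter> y) \<le> 1"
    using assms(1-3) by (auto simp: linear_hg_def)
  moreover have "card {u, v} \<le> card (x \<inter> y)"
    using assms(4-8) by (intro card_mono) auto
  ultimately show False
    using \<open>u \<noteq> v\<close> by simp
qed

definition earlier_nbrs :: "('v \<times> 'v) set \<Rightarrow> 'v list \<Rightarrow> nat \<Rightarrow> nat set" where
  "earlier_nbrs R vs i = {j. j < i \<and> ((vs ! j, vs ! i) \<in> R \<or> (vs ! i, vs ! j) \<in> R)}"

lemma two_degenerate_iff:
  "two_degenerate V R \<longleftrightarrow>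
     (\<exists>vs. distinct vs \<and> set vs = V \<and> (\<forall>i<length vs. card (earlier_nbrs R vs i) \<le> 2))"
  by (simp add: two_degenerate_def earlier_nbrs_def)

definition edge_between :: "('v \<times> 'v) set \<Rightarrow> 'v \<Rightarrow> 'v \<Rightarrow> 'v \<times> 'v" where
  "edge_between R P Q = (if (P, Q) \<in> R then (P, Q) else (Q, P))"

lemma edge_between_earlier_nbr:
  assumes "j \<in> earlier_nbrs R vs i"
  shows "j < i" "edge_between R (vs ! i) (vs ! j) \<in> R"
    "edge_between R (vs ! i) (vs ! j) \<in> {(vs ! i, vs ! j), (vs ! j, vs ! i)}"
  using assms by (auto simp: earlier_nbrs_def edge_between_def)

lemma card_le_sum_earlier_nbrs:
  assumes "asym R" "R \<subseteq> set vs \<times> set vs"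
  shows "card R \<le> (\<Sum>i<length vs. card (earlier_nbrs R vs i))"
proof -
  define D where "D = (SIGMA i:{..<length vs}. earlier_nbrs R vs i)"
  define e where "e = (\<lambda>(i, j). edge_between R (vs ! i) (vs ! j))"
  have fin: "finite (earlier_nbrs R vs i)" for i
    by (simp add: earlier_nbrs_def)
  have "R \<subseteq> e ` D"
  proof (rule subrelI)
    fix P Q assume PQ: "(P, Q) \<in> R"
    then have "P \<in> set vs" "Q \<in> set vs"
      using assms(2) by auto
    then obtain p q where pq: "p < length vs" "vs ! p = P" "q < length vs" "vs ! q = Q"
      by (auto simp: in_set_conv_nth)
    have "p \<noteq> q"
      using PQ pq asymD[OF assms(1)] by blast
    show "(P, Q) \<in> e ` D"
    proof (cases "q < p")
      case True
      then have "(p, q) \<in> D" "e (p, q) = (P, Q)"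
        using PQ pq by (auto simp: D_def e_def earlier_nbrs_def edge_between_def)
      then show ?thesis by force
    next
      case False
      then have "(q, p) \<in> D" "e (q, p) = (P, Q)"
        using PQ pq \<open>p \<noteq> q\<close> asymD[OF assms(1) PQ]
        by (auto simp: D_def e_def earlier_nbrs_def edge_between_def)
      then show ?thesis by force
    qed
  qed
  then have "card R \<le> card (e ` D)"
    by (rule card_mono[rotated]) (simp add: D_def fin)
  also have "\<dots> \<le> card D"
    by (rule card_image_le) (simp add: D_def fin)
  also have "\<dots> = (\<Sum>i<length vs. card (earlier_nbrs R vs i))"
    by (simp add: D_def card_SigmaI fin)
  finally show ?thesis .
qed

definition first_index :: "'v set list \<Rightarrow> 'v \<Rightarrow> nat" where
  "first_index vs z = (LEAST i. z \<in> vs ! i)"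

lemma first_index_le: "z \<in> vs ! j \<Longrightarrow> first_index vs z \<le> j"
  by (simp add: first_index_def Least_le)

lemma first_index:
  assumes "z \<in> \<Union>(set vs)"
  shows "first_index vs z < length vs" "z \<in> vs ! first_index vs z"
proof -
  obtain i where i: "i < length vs" "z \<in> vs ! i"
    using assms by (auto simp: in_set_conv_nth)
  show "z \<in> vs ! first_index vs z"
    unfolding first_index_def by (rule LeastI[of _ i]) (rule i(2))
  show "first_index vs z < length vs"
    using first_index_le[OF i(2)] i(1) by simp
qed

lemma sum_first_index_bound:
  assumes "\<forall>P\<in>set vs. finite P \<and> card P \<le> 2" "\<forall>i<length vs. d i \<le> 2"
  shows "2 * card (\<Union>(set vs)) + 2 * (\<Sum>i<length vs. d i)
           \<le> (\<Sum>z\<in>\<Union>(set vs). d (first_index vs z)) + 4 * length vs"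
proof -
  define Z where "Z = \<Union>(set vs)"
  define n where "n i = card {z \<in> Z. first_index vs z = i}" for i
  have finZ: "finite Z"
    using assms(1) by (auto simp: Z_def)
  have idx: "first_index vs z < length vs" "z \<in> vs ! first_index vs z" if "z \<in> Z" for z
    using that unfolding Z_def by (rule first_index)+
  then have img: "first_index vs ` Z \<subseteq> {..<length vs}"
    by auto
  have "card Z = (\<Sum>i<length vs. n i)"
    using sum.group[OF finZ _ img, of "\<lambda>_. 1::nat"] by (simp add: n_def)
  moreover have "(\<Sum>z\<in>Z. d (first_index vs z)) = (\<Sum>i<length vs. n i * d i)"
    using sum.group[OF finZ _ img, of "\<lambda>z. d (first_index vs z)"] by (simp add: n_def)
  moreover have "2 * n i + 2 * d i \<le> n i * d i + 4" if "i < length vs" for i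
    \<comment> \<open>that is, \<open>(2 - n i) * (2 - d i) \<ge> 0\<close>\<close>
  proof -
    have "{z \<in> Z. first_index vs z = i} \<subseteq> vs ! i"
      using idx(2) by auto
    moreover have "finite (vs ! i)" "card (vs ! i) \<le> 2"
      using assms(1) that by simp_all
    ultimately have "n i \<le> 2"
      unfolding n_def by (meson card_mono order_trans)
    moreover have "d i \<le> 2"
      using assms(2) that by blast
    ultimately show ?thesis
      by (auto simp: le_Suc_eq numeral_2_eq_2)
  qed
  then have "(\<Sum>i<length vs. 2 * n i + 2 * d i) \<le> (\<Sum>i<length vs. n i * d i + 4)"
    by (intro sum_mono) simp
  ultimately show ?thesis
    by (simp add: Z_def sum.distrib sum_distrib_left)
qed

lemma sum_mult_pred_le:
  fixes m :: "'b \<Rightarrow> nat"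
  assumes "finite S"
  shows "(\<Sum>x\<in>S. m x * (m x - 1))
           \<le> (\<Sum>x\<in>S. m x) + (\<Sum>x\<in>S. m x - 2) * ((\<Sum>x\<in>S. m x - 2) + 2)"
proof -
  define Y where "Y = (\<Sum>x\<in>S. m x - 2)"
  have "m x * (m x - 1) \<le> m x + (m x - 2) * (Y + 2)" if "x \<in> S" for x
  proof (cases "m x < 2")
    case True
    then show ?thesis by (cases "m x") auto
  next
    case False
    then obtain n where n: "m x = n + 2"
      by (metis add.commute le_Suc_ex not_less)
    have "n \<le> Y"
      unfolding Y_def using member_le_sum[OF that _ assms, of "\<lambda>x. m x - 2"] n by simp
    then have "(n + 2) * n \<le> n * (Y + 2)"
      by (simp add: mult.commute mult_right_mono)
    then show ?thesis
      using n by (simp add: algebra_simps)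
  qed
  then have "(\<Sum>x\<in>S. m x * (m x - 1)) \<le> (\<Sum>x\<in>S. m x + (m x - 2) * (Y + 2))"
    by (rule sum_mono)
  then show ?thesis
    by (simp add: Y_def sum.distrib sum_distrib_right)
qed

locale realised_graph =
  fixes Aa Bb Cc :: "'a set" and E :: "'a set set" and EF :: "('a set \<times> 'a set) set"
    and a1 a2 b1 b2 apex :: "'a set \<times> 'a set \<Rightarrow> 'a"
  assumes tripartite: "tripartite_3graph Aa Bb Cc E" and linear: "linear_hg E"
    and realised: "\<And>f. f \<in> EF \<Longrightarrow> fst f = {a1 f, a2 f} \<and> snd f = {b1 f, b2 f} \<and> a1 f \<noteq> a2 f \<and>
        fst f \<subseteq> Aa \<and> snd f \<subseteq> Bb \<and> apex f \<in> Cc \<and>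
        {a1 f, b1 f, apex f} \<in> E \<and> {a2 f, b2 f, apex f} \<in> E"
begin

lemma finite_classes: "finite Aa" "finite Bb" "finite Cc"
  using tripartite by (simp_all add: tripartite_3graph_def)

lemma disjoint_classes: "Aa \<inter> Bb = {}" "Aa \<inter> Cc = {}" "Bb \<inter> Cc = {}"
  using tripartite by (simp_all add: tripartite_3graph_def)

lemma finite_hyperedge: "h \<in> E \<Longrightarrow> finite h"
  using tripartite by (auto simp: tripartite_3graph_def)

lemma realisedD:
  assumes "f \<in> EF"
  shows "fst f = {a1 f, a2 f}" "snd f = {b1 f, b2 f}" "a1 f \<noteq> a2 f"
    "a1 f \<in> Aa" "a2 f \<in> Aa" "b1 f \<in> Bb" "b2 f \<in> Bb" "apex f \<in> Cc"
    "{a1 f, b1 f, apex f} \<in> E" "{a2 f, b2 f, apex f} \<in> E"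
  using realised[OF assms] by auto

lemma finite_EF: "finite EF"
proof (rule finite_subset)
  show "EF \<subseteq> Pow Aa \<times> Pow Bb"
    using realised by fastforce
  show "finite (Pow Aa \<times> Pow Bb)"
    using finite_classes by simp
qed

lemma asym_EF: "asym EF"
proof (rule asymI)
  fix P Q assume "(P, Q) \<in> EF"
  then have "a1 (P, Q) \<in> P \<inter> Aa"
    using realisedD(1,4)[of "(P, Q)"] by (metis IntI fst_conv insertI1)
  moreover have "P \<subseteq> Bb" if "(Q, P) \<in> EF"
    using realised[OF that] by simp
  ultimately show "(Q, P) \<notin> EF"
    using disjoint_classes by blast
qed

definition cells :: "'a set \<times> 'a set \<Rightarrow> 'a set set" where
  "cells f = {{a1 f, b1 f, apex f}, {a2 f, b2 f, apex f}}"

definition cell_at :: "'a set \<times> 'a set \<Rightarrow> 'a \<Rightarrow> 'a set" where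
  "cell_at f z = (if z \<in> {a1 f, b1 f} then {a1 f, b1 f, apex f} else {a2 f, b2 f, apex f})"

definition all_cells :: "'a set set" where
  "all_cells = (\<Union>f\<in>EF. cells f)"

definition apexes :: "'a set" where
  "apexes = apex ` EF"

definition cells_through :: "'a \<Rightarrow> 'a set set" where
  "cells_through x = {h \<in> all_cells. x \<in> h}"

lemma all_cells_subset_E: "all_cells \<subseteq> E"
  by (auto simp: all_cells_def cells_def realisedD)

lemma finite_all_cells: "finite all_cells"
  by (simp add: all_cells_def cells_def finite_EF)

lemma apexes_subset_Cc: "apexes \<subseteq> Cc"
  by (auto simp: apexes_def realisedD)

lemma finite_apexes: "finite apexes"
  by (simp add: apexes_def finite_EF)

lemma cell_subset:
  assumes "f \<in> EF" "h \<in> cells f"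
  shows "h \<subseteq> fst f \<union> snd f \<union> {apex f}"
  using assms(2) realisedD(1,2)[OF assms(1)] by (auto simp: cells_def)

lemma cell_inter_Cc:
  assumes "f \<in> EF" "h \<in> cells f"
  shows "h \<inter> Cc = {apex f}"
  using assms(2) realisedD[OF assms(1)] disjoint_classes by (auto simp: cells_def)

lemma card_cells:
  assumes "f \<in> EF"
  shows "card (cells f) = 2"
proof -
  have "a1 f \<notin> {a2 f, b2 f, apex f}"
    using realisedD[OF assms] disjoint_classes by auto
  then have "{a1 f, b1 f, apex f} \<noteq> {a2 f, b2 f, apex f}"
    by blast
  then show ?thesis
    by (simp add: cells_def)
qed

lemma cell_at:
  assumes "f \<in> EF" "z \<in> fst f \<union> snd f"
  shows "cell_at f z \<in> cells f" "z \<in> cell_at f z"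
  using assms realisedD(1,2)[OF assms(1)] by (auto simp: cell_at_def cells_def)

lemma cell_other_vertex:
  assumes f: "f \<in> EF" "f \<in> {(P, Q), (Q, P)}" and h: "h \<in> cells f"
    and z: "z \<in> h" "z \<in> P" and z': "z' \<in> h" "z' \<in> Aa \<union> Bb" "z' \<noteq> z"
  shows "z' \<in> Q"
proof -
  obtain x y where xy: "h = {x, y, apex f}" "x \<in> fst f" "y \<in> snd f"
    using h realisedD(1,2)[OF f(1)] by (auto simp: cells_def)
  have sides: "fst f \<subseteq> Aa" "snd f \<subseteq> Bb" "apex f \<in> Cc"
    using realised[OF f(1)] by auto
  have "z' \<noteq> apex f"
    using z'(2) sides(3) disjoint_classes by auto
  consider (PQ) "f = (P, Q)" | (QP) "f = (Q, P)"
    using f(2) by blast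
  then show ?thesis
  proof cases
    case PQ
    then have "z = x"
      using z xy sides disjoint_classes by auto
    then show ?thesis
      using z' xy PQ \<open>z' \<noteq> apex f\<close> by auto
  next
    case QP
    then have "z = y"
      using z xy sides disjoint_classes by auto
    then show ?thesis
      using z' xy QP \<open>z' \<noteq> apex f\<close> by auto
  qed
qed

lemma cells_eq_hyperedges_through_apex:
  assumes f: "f \<in> EF" and P: "P \<in> {fst f, snd f}"
  shows "cells f = {h \<in> E. apex f \<in> h \<and> h \<inter> P \<noteq> {}}"
proof (intro equalityI subsetI)
  fix h assume "h \<in> cells f"
  then show "h \<in> {h \<in> E. apex f \<in> h \<and> h \<inter> P \<noteq> {}}"
    using P realisedD[OF f] by (auto simp: cells_def)
next
  fix h assume h: "h \<in> {h \<in> E. apex f \<in> h \<and> h \<inter> P \<noteq> {}}"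
  then obtain x where x: "x \<in> h" "x \<in> P"
    by blast
  have x_ne: "x \<noteq> apex f"
    using x(2) P realisedD[OF f] disjoint_classes by auto
  have "h = {a1 f, b1 f, apex f}" if "x \<in> {a1 f, b1 f}"
    using linear_hg_eqI[OF linear, of h "{a1 f, b1 f, apex f}" x "apex f"]
      h x x_ne that realisedD[OF f] finite_hyperedge by auto
  moreover have "h = {a2 f, b2 f, apex f}" if "x \<in> {a2 f, b2 f}"
    using linear_hg_eqI[OF linear, of h "{a2 f, b2 f, apex f}" x "apex f"]
      h x x_ne that realisedD[OF f] finite_hyperedge by auto
  moreover have "x \<in> {a1 f, b1 f} \<or> x \<in> {a2 f, b2 f}"
    using x(2) P realisedD(1,2)[OF f] by auto
  ultimately show "h \<in> cells f"
    by (auto simp: cells_def)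
qed

lemma cells_inj:
  assumes "f \<in> EF" "g \<in> EF" "cells f = cells g"
  shows "f = g"
proof -
  have sides: "\<Union>(cells h) \<inter> Aa = fst h" "\<Union>(cells h) \<inter> Bb = snd h" if "h \<in> EF" for h
    using realisedD[OF that] disjoint_classes by (auto simp: cells_def)
  show ?thesis
    using sides[OF assms(1)] sides[OF assms(2)] assms(3) by (simp add: prod_eq_iff)
qed

lemma eq_if_same_apex_and_side:
  assumes "f \<in> EF" "g \<in> EF" "apex f = apex g" "P \<in> {fst f, snd f}" "P \<in> {fst g, snd g}"
  shows "f = g"
  using cells_eq_hyperedges_through_apex[OF assms(1,4)]
    cells_eq_hyperedges_through_apex[OF assms(2,5)] assms(3) cells_inj[OF assms(1,2)]
  by simp

lemma card_all_cells_le: "card all_cells \<le> 2 * card EF"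
proof -
  have "card all_cells \<le> (\<Sum>f\<in>EF. card (cells f))"
    unfolding all_cells_def by (rule card_UN_le[OF finite_EF])
  also have "\<dots> = 2 * card EF"
    by (simp add: card_cells)
  finally show ?thesis .
qed

lemma card_all_cells_eq_sum: "card all_cells = (\<Sum>x\<in>apexes. card (cells_through x))"
proof -
  have "all_cells = (\<Union>x\<in>apexes. cells_through x)"
    by (auto simp: all_cells_def cells_through_def apexes_def cells_def)
  moreover have "cells_through x \<inter> cells_through y = {}"
    if "x \<in> apexes" "y \<in> apexes" "x \<noteq> y" for x y
  proof (rule ccontr)
    assume "cells_through x \<inter> cells_through y \<noteq> {}"
    then obtain f h where f: "f \<in> EF" "h \<in> cells f" and "x \<in> h" "y \<in> h"
      by (auto simp: cells_through_def all_cells_def)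
    then have "{x, y} \<subseteq> h \<inter> Cc"
      using that(1,2) apexes_subset_Cc by auto
    then show False
      using cell_inter_Cc[OF f] that(3) by auto
  qed
  moreover have "finite (cells_through x)" for x
    using finite_all_cells by (simp add: cells_through_def)
  ultimately show ?thesis
    by (simp add: card_UN_disjoint finite_apexes)
qed

lemma two_le_card_cells_through:
  assumes "x \<in> apexes"
  shows "2 \<le> card (cells_through x)"
proof -
  obtain f where f: "f \<in> EF" "x = apex f"
    using assms by (auto simp: apexes_def)
  then have "cells f \<subseteq> cells_through x"
    by (auto simp: cells_through_def all_cells_def cells_def)
  then show ?thesis
    using card_mono[of "cells_through x" "cells f"] card_cells[OF f(1)] finite_all_cells
    by (simp add: cells_through_def)
qed

lemma two_card_apexes_le: "2 * card apexes \<le> card all_cells"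
proof -
  have "(\<Sum>x\<in>apexes. 2) \<le> (\<Sum>x\<in>apexes. card (cells_through x))"
    by (rule sum_mono) (rule two_le_card_cells_through)
  then show ?thesis
    by (simp add: card_all_cells_eq_sum mult.commute)
qed

lemma card_apex_fibre_le: "card {f \<in> EF. apex f = x} \<le> card (cells_through x) choose 2"
proof -
  have "finite (cells_through x)"
    using finite_all_cells by (simp add: cells_through_def)
  moreover have "inj_on cells {f \<in> EF. apex f = x}"
    using cells_inj unfolding inj_on_def by blast
  moreover have "cells ` {f \<in> EF. apex f = x} \<subseteq> {S. S \<subseteq> cells_through x \<and> card S = 2}"
    using card_cells by (auto simp: cells_through_def all_cells_def cells_def)
  ultimately have "card {f \<in> EF. apex f = x} \<le> card {S. S \<subseteq> cells_through x \<and> card S = 2}"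
    by (intro card_inj_on_le) auto
  then show ?thesis
    by (simp add: n_subsets \<open>finite (cells_through x)\<close>)
qed

lemma two_card_EF_le:
  "2 * card EF \<le> card all_cells
     + (card all_cells - 2 * card apexes) * (card all_cells - 2 * card apexes + 2)"
proof -
  define m where "m x = card (cells_through x)" for x
  have "card EF = (\<Sum>x\<in>apexes. card {f \<in> EF. apex f = x})"
    using sum.group[OF finite_EF finite_apexes, where g = apex and h = "\<lambda>_. 1::nat"]
    by (simp add: apexes_def)
  moreover have "2 * card {f \<in> EF. apex f = x} \<le> m x * (m x - 1)" for x
    using card_apex_fibre_le[of x] unfolding m_def choose_two by linarith
  ultimately have "2 * card EF \<le> (\<Sum>x\<in>apexes. m x * (m x - 1))"
    by (simp add: sum_distrib_left sum_mono)
  also have "\<dots> \<le> (\<Sum>x\<in>apexes. m x) + (\<Sum>x\<in>apexes. m x - 2) * ((\<Sum>x\<in>apexes. m x - 2) + 2)"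
    by (rule sum_mult_pred_le[OF finite_apexes])
  also have "(\<Sum>x\<in>apexes. m x) = card all_cells"
    by (simp add: m_def card_all_cells_eq_sum)
  also have "(\<Sum>x\<in>apexes. m x - 2) = card all_cells - 2 * card apexes"
    using two_le_card_cells_through
    by (simp add: sum_subtractf_nat m_def card_all_cells_eq_sum mult.commute)
  finally show ?thesis .
qed

lemma all_cells_subset:
  assumes "EF \<subseteq> V \<times> V" "h \<in> all_cells"
  shows "h \<subseteq> \<Union>V \<union> apexes"
proof -
  obtain f where f: "f \<in> EF" "h \<in> cells f"
    using assms(2) by (auto simp: all_cells_def)
  then have "h \<subseteq> fst f \<union> snd f \<union> {apex f}"
    by (rule cell_subset)
  moreover have "fst f \<in> V" "snd f \<in> V" "apex f \<in> apexes"
    using assms(1) f(1) by (auto simp: apexes_def)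
  ultimately show ?thesis
    by blast
qed

lemma two_card_EF_le_if_few_extra_cells:
  assumes "card all_cells < 2 * card apexes + 2 * t"
  shows "2 * card EF \<le> card all_cells + 4 * t ^ 2 + 4 * t"
proof -
  have "card all_cells - 2 * card apexes \<le> 2 * t"
    using assms by linarith
  then have "(card all_cells - 2 * card apexes) * (card all_cells - 2 * card apexes + 2)
      \<le> 2 * t * (2 * t + 2)"
    by (intro mult_mono) auto
  then show ?thesis
    using two_card_EF_le by (simp add: algebra_simps power2_eq_square)
qed

definition back_edge :: "'a set list \<Rightarrow> 'a \<Rightarrow> nat \<Rightarrow> 'a set \<times> 'a set" where
  "back_edge vs z j = edge_between EF (vs ! first_index vs z) (vs ! j)"

definition back_cell :: "'a set list \<Rightarrow> 'a \<Rightarrow> nat \<Rightarrow> 'a set" where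
  "back_cell vs z j = cell_at (back_edge vs z j) z"

lemma back_edge:
  assumes "j \<in> earlier_nbrs EF vs (first_index vs z)"
  shows "j < first_index vs z" "back_edge vs z j \<in> EF"
    "back_edge vs z j \<in> {(vs ! first_index vs z, vs ! j), (vs ! j, vs ! first_index vs z)}"
  using assms unfolding back_edge_def by (rule edge_between_earlier_nbr)+

lemma back_cell:
  assumes "z \<in> \<Union>(set vs)" "j \<in> earlier_nbrs EF vs (first_index vs z)"
  shows "back_cell vs z j \<in> cells (back_edge vs z j)" "z \<in> back_cell vs z j"
proof -
  have "z \<in> fst (back_edge vs z j) \<union> snd (back_edge vs z j)"
    using back_edge(3)[OF assms(2)] first_index(2)[OF assms(1)] by auto
  then show "back_cell vs z j \<in> cells (back_edge vs z j)" "z \<in> back_cell vs z j"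
    using cell_at[OF back_edge(2)[OF assms(2)]] by (simp_all add: back_cell_def)
qed

lemma first_index_less_if_in_back_cell:
  assumes "\<Union>(set vs) \<subseteq> Aa \<union> Bb" "z \<in> \<Union>(set vs)" "j \<in> earlier_nbrs EF vs (first_index vs z)"
    and "z' \<in> \<Union>(set vs)" "z' \<in> back_cell vs z j" "z' \<noteq> z"
  shows "first_index vs z' < first_index vs z"
proof -
  have "z' \<in> vs ! j"
    using cell_other_vertex[OF back_edge(2,3)[OF assms(3)] back_cell[OF assms(2,3)]
        first_index(2)[OF assms(2)] assms(5) _ assms(6)] assms(1,4) by blast
  then show ?thesis
    using first_index_le back_edge(1)[OF assms(3)] by (meson le_less_trans)
qed

text \<open>Two distinct vertices in one back cell would each occur before the other. For a fixed
  vertex the back cell determines the apex and one pair of its edge, hence the edge itself.\<close>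
lemma inj_on_back_cell:
  assumes dist: "distinct vs" and AB: "\<Union>(set vs) \<subseteq> Aa \<union> Bb"
  shows "inj_on (\<lambda>(z, j). back_cell vs z j)
           (SIGMA z:\<Union>(set vs). earlier_nbrs EF vs (first_index vs z))"
proof (rule inj_onI)
  fix p p'
  assume p: "p \<in> (SIGMA z:\<Union>(set vs). earlier_nbrs EF vs (first_index vs z))"
    and p': "p' \<in> (SIGMA z:\<Union>(set vs). earlier_nbrs EF vs (first_index vs z))"
    and eq_p: "(\<lambda>(z, j). back_cell vs z j) p = (\<lambda>(z, j). back_cell vs z j) p'"
  obtain z j z' j' where pairs: "p = (z, j)" "p' = (z', j')"
    by (cases p, cases p') simp
  have z: "z \<in> \<Union>(set vs)" "j \<in> earlier_nbrs EF vs (first_index vs z)"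
    and z': "z' \<in> \<Union>(set vs)" "j' \<in> earlier_nbrs EF vs (first_index vs z')"
    and eq: "back_cell vs z j = back_cell vs z' j'"
    using p p' eq_p by (simp_all only: pairs mem_Sigma_iff case_prod_conv)
  have "z' = z"
  proof (rule ccontr)
    assume "z' \<noteq> z"
    then show False
      using first_index_less_if_in_back_cell[OF AB z z'(1)]
        first_index_less_if_in_back_cell[OF AB z' z(1)] back_cell(2)[OF z] back_cell(2)[OF z'] eq
      by fastforce
  qed
  with z' eq have j': "j' \<in> earlier_nbrs EF vs (first_index vs z)"
    and eq': "back_cell vs z j = back_cell vs z j'"
    by simp_all
  define i where "i = first_index vs z"
  have "apex (back_edge vs z j) = apex (back_edge vs z j')"
    using cell_inter_Cc[OF back_edge(2)[OF z(2)] back_cell(1)[OF z]]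
      cell_inter_Cc[OF back_edge(2)[OF j'] back_cell(1)[OF z(1) j']] eq' by simp
  moreover have "vs ! i \<in> {fst (back_edge vs z j), snd (back_edge vs z j)}"
    "vs ! i \<in> {fst (back_edge vs z j'), snd (back_edge vs z j')}"
    using back_edge(3)[OF z(2)] back_edge(3)[OF j'] by (auto simp: i_def)
  ultimately have same_edge: "back_edge vs z j = back_edge vs z j'"
    using eq_if_same_apex_and_side back_edge(2)[OF z(2)] back_edge(2)[OF j'] by blast
  have lengths: "j < i" "j' < i" "i < length vs"
    using back_edge(1)[OF z(2)] back_edge(1)[OF j'] first_index(1)[OF z(1)] by (simp_all add: i_def)
  then have "vs ! j \<noteq> vs ! i" "vs ! j' \<noteq> vs ! i"
    using nth_eq_iff_index_eq[OF dist] by auto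
  then have "vs ! j = vs ! j'"
    using same_edge back_edge(3)[OF z(2)] back_edge(3)[OF j'] by (auto simp: i_def)
  then show "p = p'"
    using nth_eq_iff_index_eq[OF dist] lengths pairs \<open>z' = z\<close> by simp
qed

lemma sum_earlier_nbrs_le_card_all_cells:
  assumes "distinct vs" "\<Union>(set vs) \<subseteq> Aa \<union> Bb"
  shows "(\<Sum>z\<in>\<Union>(set vs). card (earlier_nbrs EF vs (first_index vs z))) \<le> card all_cells"
proof -
  let ?D = "SIGMA z:\<Union>(set vs). earlier_nbrs EF vs (first_index vs z)"
  have "finite (\<Union>(set vs))"
    using assms(2) finite_classes by (meson finite_UnI finite_subset)
  then have "(\<Sum>z\<in>\<Union>(set vs). card (earlier_nbrs EF vs (first_index vs z))) = card ?D"
    by (simp add: card_SigmaI earlier_nbrs_def)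
  also have "\<dots> \<le> card all_cells"
  proof (rule card_inj_on_le[OF inj_on_back_cell[OF assms] _ finite_all_cells])
    show "(\<lambda>(z, j). back_cell vs z j) ` ?D \<subseteq> all_cells"
      using back_cell(1) back_edge(2) by (force simp: all_cells_def)
  qed
  finally show ?thesis .
qed

lemma card_vertices_le:
  assumes "distinct vs" "EF \<subseteq> set vs \<times> set vs"
    and "\<forall>i<length vs. card (earlier_nbrs EF vs i) \<le> 2"
    and "\<forall>P\<in>set vs. P \<subseteq> Aa \<union> Bb \<and> card P \<le> 2"
  shows "2 * card (\<Union>(set vs)) + 2 * card EF \<le> card all_cells + 4 * length vs"
proof -
  have "\<forall>P\<in>set vs. finite P \<and> card P \<le> 2"
    using assms(4) finite_classes by (meson finite_UnI finite_subset)
  then have "2 * card (\<Union>(set vs)) + 2 * (\<Sum>i<length vs. card (earlier_nbrs EF vs i))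
      \<le> (\<Sum>z\<in>\<Union>(set vs). card (earlier_nbrs EF vs (first_index vs z))) + 4 * length vs"
    using assms(3) by (rule sum_first_index_bound)
  moreover have "card EF \<le> (\<Sum>i<length vs. card (earlier_nbrs EF vs i))"
    by (rule card_le_sum_earlier_nbrs[OF asym_EF assms(2)])
  moreover have "(\<Sum>z\<in>\<Union>(set vs). card (earlier_nbrs EF vs (first_index vs z))) \<le> card all_cells"
    using assms(1,4) by (intro sum_earlier_nbrs_le_card_all_cells) auto
  ultimately show ?thesis
    by linarith
qed

lemma card_vertex_set_le:
  assumes "distinct vs" "EF \<subseteq> set vs \<times> set vs" "\<forall>i<length vs. card (earlier_nbrs EF vs i) \<le> 2"
    and "\<forall>P\<in>set vs. P \<subseteq> Aa \<union> Bb \<and> card P \<le> 2"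
    and t: "card EF + t = 2 * length vs"
  shows "card (\<Union>(set vs) \<union> apexes) \<le> card all_cells + t"
    and "card all_cells < card (\<Union>(set vs) \<union> apexes) \<Longrightarrow>
           4 * length vs \<le> card all_cells + 4 * t ^ 2 + 6 * t"
proof -
  have V_le: "card (\<Union>(set vs) \<union> apexes) \<le> card (\<Union>(set vs)) + card apexes"
    by (rule card_Un_le)
  have cover: "2 * card (\<Union>(set vs)) + 2 * card EF \<le> card all_cells + 4 * length vs"
    using card_vertices_le[OF assms(1-4)] .
  show "card (\<Union>(set vs) \<union> apexes) \<le> card all_cells + t"
    using V_le cover t two_card_apexes_le by linarith
  assume "card all_cells < card (\<Union>(set vs) \<union> apexes)"
  then have "2 * card EF \<le> card all_cells + 4 * t ^ 2 + 4 * t"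
    using V_le cover t by (intro two_card_EF_le_if_few_extra_cells) linarith
  then show "4 * length vs \<le> card all_cells + 4 * t ^ 2 + 6 * t"
    using t by linarith
qed

lemma cell_subgraph:
  assumes vs: "distinct vs" "EF \<subseteq> set vs \<times> set vs"
      "\<forall>i<length vs. card (earlier_nbrs EF vs i) \<le> 2"
    and pairs: "\<forall>P\<in>set vs. P \<subseteq> Aa \<union> Bb \<and> card P = 2"
    and t: "card EF + t = 2 * length vs" "1 \<le> t"
  shows "\<exists>V' E'. V' \<subseteq> Aa \<union> Bb \<union> Cc \<and> E' \<subseteq> E \<and> (\<forall>e\<in>E'. e \<subseteq> V') \<and>
           int (card V') - 4 * int t \<le> int (card E') \<and> card E' \<le> 4 * length vs \<and>
           (int (card E') \<ge> 4 * int (length vs) - 10^4 * int t ^ 3 \<or>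
            (card E' \<ge> card V' \<and> card V' > 0))"
proof -
  define V where "V = \<Union>(set vs) \<union> apexes"
  have bounds: "card V \<le> card all_cells + t"
    "card all_cells < card V \<Longrightarrow> 4 * length vs \<le> card all_cells + 4 * t ^ 2 + 6 * t"
    using card_vertex_set_le[OF vs _ t(1)] pairs unfolding V_def by simp_all
  have "\<Union>(set vs) \<subseteq> Aa \<union> Bb"
    using pairs by (intro Union_least) blast
  then have "finite V"
    using finite_classes finite_apexes finite_subset by (auto simp: V_def)
  obtain P where "P \<in> set vs"
    using t by (cases vs) auto
  then have "V \<noteq> {}"
    using pairs by (fastforce simp: V_def)
  have "t \<le> t ^ 3" "t ^ 2 \<le> t ^ 3"
    using t(2) power_increasing[of 1 3 t] power_increasing[of 2 3 t] by simp_all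
  then have "int (4 * length vs) \<le> int (card all_cells + 10000 * t ^ 3)"
    if "card all_cells < card V"
    using bounds(2)[OF that] by (subst of_nat_le_iff) linarith
  then have dense: "card all_cells < card V \<Longrightarrow>
      4 * int (length vs) - 10^4 * int t ^ 3 \<le> int (card all_cells)"
    by simp
  show ?thesis
  proof (intro exI conjI)
    show "V \<subseteq> Aa \<union> Bb \<union> Cc"
      using pairs apexes_subset_Cc by (auto simp: V_def)
    show "all_cells \<subseteq> E"
      by (rule all_cells_subset_E)
    show "\<forall>h\<in>all_cells. h \<subseteq> V"
      using all_cells_subset[OF vs(2)] by (simp add: V_def)
    show "int (card V) - 4 * int t \<le> int (card all_cells)"
      using bounds(1) by linarith
    show "card all_cells \<le> 4 * length vs"
      using card_all_cells_le t(1) by linarith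
    show "4 * int (length vs) - 10^4 * int t ^ 3 \<le> int (card all_cells) \<or>
        (card V \<le> card all_cells \<and> 0 < card V)"
      using dense \<open>finite V\<close> \<open>V \<noteq> {}\<close> by (cases "card V \<le> card all_cells") auto
  qed
qed

end

lemma realisation_of_edge:
  assumes "f \<in> EF" "card (fst f) = 2" "card (snd f) = 2"
    and EF_cond: "\<forall>a1 a2 b1 b2. ({a1, a2}, {b1, b2}) \<in> EF \<longrightarrow>
        (\<exists>c\<in>Cc. {a1, b1, c} \<in> E \<and> {a2, b2, c} \<in> E) \<or>
        (\<exists>c\<in>Cc. {a1, b2, c} \<in> E \<and> {a2, b1, c} \<in> E)"
  shows "\<exists>x1 x2 y1 y2 c. fst f = {x1, x2} \<and> snd f = {y1, y2} \<and> x1 \<noteq> x2 \<and>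
           c \<in> Cc \<and> {x1, y1, c} \<in> E \<and> {x2, y2, c} \<in> E"
proof -
  obtain x1 x2 y1 y2 where xy: "fst f = {x1, x2}" "x1 \<noteq> x2" "snd f = {y1, y2}"
    using assms(2,3) by (meson card_2_iff)
  then have "({x1, x2}, {y1, y2}) \<in> EF"
    using assms(1) by (metis prod.collapse)
  with EF_cond consider
    c where "c \<in> Cc" "{x1, y1, c} \<in> E" "{x2, y2, c} \<in> E" |
    c where "c \<in> Cc" "{x1, y2, c} \<in> E" "{x2, y1, c} \<in> E"
    by blast
  then show ?thesis
  proof cases
    case (1 c)
    then show ?thesis
      using xy by (intro exI[of _ x1] exI[of _ x2] exI[of _ y1] exI[of _ y2] exI[of _ c]) simp
  next
    case (2 c)
    then show ?thesis
      using xy insert_commute[of y1 y2 "{}"]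
      by (intro exI[of _ x1] exI[of _ x2] exI[of _ y2] exI[of _ y1] exI[of _ c]) simp
  qed
qed

lemma realisation_exists:
  assumes tri: "tripartite_3graph Aa Bb Cc E" and lin: "linear_hg E"
    and EF_parts: "EF \<subseteq> {P. P \<subseteq> Aa \<and> card P = 2} \<times> {Q. Q \<subseteq> Bb \<and> card Q = 2}"
    and EF_cond: "\<forall>a1 a2 b1 b2. ({a1, a2}, {b1, b2}) \<in> EF \<longrightarrow>
        (\<exists>c\<in>Cc. {a1, b1, c} \<in> E \<and> {a2, b2, c} \<in> E) \<or>
        (\<exists>c\<in>Cc. {a1, b2, c} \<in> E \<and> {a2, b1, c} \<in> E)"
  obtains a1 a2 b1 b2 apex where "realised_graph Aa Bb Cc E EF a1 a2 b1 b2 apex"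
proof -
  have "fst f \<subseteq> Aa \<and> snd f \<subseteq> Bb \<and> (\<exists>x1 x2 y1 y2 c. fst f = {x1, x2} \<and> snd f = {y1, y2} \<and>
      x1 \<noteq> x2 \<and> c \<in> Cc \<and> {x1, y1, c} \<in> E \<and> {x2, y2, c} \<in> E)" if "f \<in> EF" for f
    using subsetD[OF EF_parts that] realisation_of_edge[OF that _ _ EF_cond]
    by (simp add: mem_Times_iff)
  then obtain a1 a2 b1 b2 apex where "\<forall>f\<in>EF. fst f = {a1 f, a2 f} \<and> snd f = {b1 f, b2 f} \<and>
      a1 f \<noteq> a2 f \<and> fst f \<subseteq> Aa \<and> snd f \<subseteq> Bb \<and> apex f \<in> Cc \<and>
      {a1 f, b1 f, apex f} \<in> E \<and> {a2 f, b2 f, apex f} \<in> E"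
    by metis
  then have "realised_graph Aa Bb Cc E EF a1 a2 b1 b2 apex"
    unfolding realised_graph_def using tri lin by blast
  then show thesis
    by (rule that)
qed

theorem lemma2p2:
  fixes Aa Bb Cc :: "'a set" and E :: "'a set set"
    and EG :: "('a set \<times> 'a set) set"
    and VF :: "'a set set" and EF :: "('a set \<times> 'a set) set"
    and k t :: nat
  assumes tri: "tripartite_3graph Aa Bb Cc E"
    and lin: "linear_hg E"
    and EG_parts: "EG \<subseteq> {P. P \<subseteq> Aa \<and> card P = 2} \<times> {Q. Q \<subseteq> Bb \<and> card Q = 2}"
    and EG_cond: "\<forall>a1 a2 b1 b2. ({a1, a2}, {b1, b2}) \<in> EG \<longrightarrow>
        (\<exists>c\<in>Cc. {a1, b1, c} \<in> E \<and> {a2, b2, c} \<in> E) \<or>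
        (\<exists>c\<in>Cc. {a1, b2, c} \<in> E \<and> {a2, b1, c} \<in> E)"
    and kt: "k \<ge> t" "t \<ge> 4"
    and VF_sub: "VF \<subseteq> {P. P \<subseteq> Aa \<and> card P = 2} \<union> {Q. Q \<subseteq> Bb \<and> card Q = 2}"
    and EF_sub: "EF \<subseteq> EG" and EF_in: "\<forall>(P, Q)\<in>EF. P \<in> VF \<and> Q \<in> VF"
    and deg: "two_degenerate VF EF"
    and cardV: "card VF = k" and cardE: "card EF = 2 * k - t"
  shows "\<exists>V' E'. V' \<subseteq> Aa \<union> Bb \<union> Cc \<and> E' \<subseteq> E \<and> (\<forall>e\<in>E'. e \<subseteq> V') \<and>
           int (card V') - 4 * int t \<le> int (card E') \<and> card E' \<le> 4 * k \<and>
           (int (card E') \<ge> 4 * int k - 10^4 * int t ^ 3 \<or> (card E' \<ge> card V' \<and> card V' > 0))"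
proof -
  obtain a1 a2 b1 b2 apex where "realised_graph Aa Bb Cc E EF a1 a2 b1 b2 apex"
    using realisation_exists[OF tri lin, of EF] EF_sub EG_parts EG_cond by blast
  then interpret realised_graph Aa Bb Cc E EF a1 a2 b1 b2 apex .
  obtain vs where vs: "distinct vs" "set vs = VF" "\<forall>i<length vs. card (earlier_nbrs EF vs i) \<le> 2"
    using deg by (auto simp: two_degenerate_iff)
  have "length vs = k"
    using distinct_card[OF vs(1)] vs(2) cardV by simp
  moreover have "EF \<subseteq> set vs \<times> set vs" "\<forall>P\<in>set vs. P \<subseteq> Aa \<union> Bb \<and> card P = 2"
    using EF_in VF_sub vs(2) by auto
  moreover have "card EF + t = 2 * k"
    using cardE kt by simp
  ultimately show ?thesis
    using cell_subgraph[OF vs(1) _ vs(3), of t] kt by simp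
qed

end
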